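(* For any $n\in\mathbb{N}, l\in\mathbb{Z}, Q\in\mathbb{C}[K^{\pm1},C_1]$, we have $u(n,l,Q)=q^{2nl}K_2^{l}g^nQv_\eta$, where $$g=F_2(1-q^{-2}K_2^{2}K^{-2})+\alpha(1-q^{-2})F_3K^{-1}.$$
   Context: Let $q\in\mathbb{C}$ be nonzero and not a root of unity, and $U=U_q(\mathfrak{sl}_3)$ the algebra generated by $E_1,E_2,F_1,F_2,K_1^{\pm1},K_2^{\pm1}$ with the Jimbo relations. Put $F_3=F_1F_2-qF_2F_1$, $K=K_1K_2^2$, $C_1=F_1E_1+\frac{qK_1+q^{-1}K_1^{-1}}{(q-q^{-1})^2}$. Let $U^+$ be the subalgebra generated by $E_1,E_2$, $\eta:U^+\to\mathbb{C}$ the algebra homomorphism with $\eta(E_1)=\alpha\neq0$, $\eta(E_2)=0$, and $M(\eta)=U\otimes_{U^+}\mathbb{C}v_\eta$ with $xv_\eta=\eta(x)v_\eta$. Write $[k]=\frac{q^k-q^{-k}}{q-q^{-1}}$, $[k]!=[k]\cdots[1]$, $[0]!=1$, $\genfrac{[}{]}{0pt}{}{n}{k}=\frac{[n]!}{[k]![n-k]!}$ for $0\le k\le n$ (0 otherwise). For $n\in\mathbb{Z}_+$, $l\in\mathbb{Z}$, $Q\in\mathbb{C}[K^{\pm1},C_1]$, $u(n,l,Q)=q^{2nl}K_2^l\sum_{k=0}^{n}\sum_{j=0}^{n-k}a_{kj}(n)F_2^{n-k}F_3^kK_2^{2j}K^{-2j-k}Qv_\eta$ with $a_{kj}(n)=(-1)^j\alpha^k(q^2-1)^kq^{j(n-3)}q^{\frac{1}{2}k(2n+2j+k-7)}\genfrac{[}{]}{0pt}{}{n}{k}\genfrac{[}{]}{0pt}{}{n-k}{j}$.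 *)

theory Defs
  imports Complex_Main
begin

definition qint :: "complex \<Rightarrow> nat \<Rightarrow> complex" where
  "qint q k = (q ^ k - inverse q ^ k) / (q - inverse q)"

definition qfact :: "complex \<Rightarrow> nat \<Rightarrow> complex" where
  "qfact q n = (\<Prod>i\<in>{1..n}. qint q i)"

definition qbinom :: "complex \<Rightarrow> nat \<Rightarrow> nat \<Rightarrow> complex" where
  "qbinom q n k = (if k \<le> n then qfact q n / (qfact q k * qfact q (n - k)) else 0)"

definition zpow :: "'a::monoid_mult \<Rightarrow> 'a \<Rightarrow> int \<Rightarrow> 'a" where
  "zpow x xi m = (if 0 \<le> m then x ^ nat m else xi ^ nat (- m))"

text \<open>iota embeds the scalars C centrally into the ring 'a, i.e. 'a is a C-algebra.\<close>
definition scalar_embedding :: "(complex \<Rightarrow> 'a::ring_1) \<Rightarrow> bool" where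
  "scalar_embedding \<iota> \<longleftrightarrow>
     (\<forall>a b. \<iota> (a + b) = \<iota> a + \<iota> b) \<and>
     (\<forall>a b. \<iota> (a * b) = \<iota> a * \<iota> b) \<and>
     \<iota> 1 = 1 \<and>
     (\<forall>c x. \<iota> c * x = x * \<iota> c)"

definition jimbo_sl3 ::
  "complex \<Rightarrow> (complex \<Rightarrow> 'a::ring_1) \<Rightarrow> 'a \<Rightarrow> 'a \<Rightarrow> 'a \<Rightarrow> 'a \<Rightarrow> 'a \<Rightarrow> 'a \<Rightarrow> 'a \<Rightarrow> 'a \<Rightarrow> bool" where
  "jimbo_sl3 q \<iota> E1 E2 F1 F2 K1 K1i K2 K2i \<longleftrightarrow>
     K1 * K1i = 1 \<and> K1i * K1 = 1 \<and> K2 * K2i = 1 \<and> K2i * K2 = 1 \<and> K1 * K2 = K2 * K1 \<and>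
     K1 * E1 * K1i = \<iota> (q ^ 2) * E1 \<and> K1 * E2 * K1i = \<iota> (inverse q) * E2 \<and>
     K2 * E1 * K2i = \<iota> (inverse q) * E1 \<and> K2 * E2 * K2i = \<iota> (q ^ 2) * E2 \<and>
     K1 * F1 * K1i = \<iota> (inverse q ^ 2) * F1 \<and> K1 * F2 * K1i = \<iota> q * F2 \<and>
     K2 * F1 * K2i = \<iota> q * F1 \<and> K2 * F2 * K2i = \<iota> (inverse q ^ 2) * F2 \<and>
     E1 * F1 - F1 * E1 = \<iota> (1 / (q - inverse q)) * (K1 - K1i) \<and>
     E2 * F2 - F2 * E2 = \<iota> (1 / (q - inverse q)) * (K2 - K2i) \<and>
     E1 * F2 = F2 * E1 \<and> E2 * F1 = F1 * E2 \<and>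
     E1 ^ 2 * E2 - \<iota> (q + inverse q) * E1 * E2 * E1 + E2 * E1 ^ 2 = 0 \<and>
     E2 ^ 2 * E1 - \<iota> (q + inverse q) * E2 * E1 * E2 + E1 * E2 ^ 2 = 0 \<and>
     F1 ^ 2 * F2 - \<iota> (q + inverse q) * F1 * F2 * F1 + F2 * F1 ^ 2 = 0 \<and>
     F2 ^ 2 * F1 - \<iota> (q + inverse q) * F2 * F1 * F2 + F1 * F2 ^ 2 = 0"

definition left_module :: "('a::ring_1 \<Rightarrow> 'v::ab_group_add \<Rightarrow> 'v) \<Rightarrow> bool" where
  "left_module act \<longleftrightarrow>
     (\<forall>a b v. act (a + b) v = act a v + act b v) \<and>
     (\<forall>a v w. act a (v + w) = act a v + act a w) \<and>
     (\<forall>a b v. act (a * b) v = act a (act b v)) \<and>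
     (\<forall>v. act 1 v = v)"

inductive_set kc_alg :: "(complex \<Rightarrow> 'a::ring_1) \<Rightarrow> 'a \<Rightarrow> 'a \<Rightarrow> 'a \<Rightarrow> 'a set"
  for \<iota> K Ki C1 where
  scalar: "\<iota> c \<in> kc_alg \<iota> K Ki C1"
| genK: "K \<in> kc_alg \<iota> K Ki C1"
| genKi: "Ki \<in> kc_alg \<iota> K Ki C1"
| genC1: "C1 \<in> kc_alg \<iota> K Ki C1"
| add: "x \<in> kc_alg \<iota> K Ki C1 \<Longrightarrow> y \<in> kc_alg \<iota> K Ki C1 \<Longrightarrow> x + y \<in> kc_alg \<iota> K Ki C1"
| mult: "x \<in> kc_alg \<iota> K Ki C1 \<Longrightarrow> y \<in> kc_alg \<iota> K Ki C1 \<Longrightarrow> x * y \<in> kc_alg \<iota> K Ki C1"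

definition acoef :: "complex \<Rightarrow> complex \<Rightarrow> nat \<Rightarrow> nat \<Rightarrow> nat \<Rightarrow> complex" where
  "acoef q \<alpha> n k j =
     (-1) ^ j * \<alpha> ^ k * (q ^ 2 - 1) ^ k * q powi (int j * (int n - 3)) *
     q powi ((int k * (2 * int n + 2 * int j + int k - 7)) div 2) *
     qbinom q n k * qbinom q (n - k) j"

text \<open>Note: k(2n+2j+k-7) is always even, so the division by 2 is exact.\<close>

end

theory Submission
  imports Defs
begin

(* Each summand of g q-commutes with the ordered monomials
   pbw n k j = F2^(n-k) F3^k K2^(2j) K^(-2j-k): the commutation factors come from the
   Jimbo relations, and F3 F2 = q^-1 F2 F3 is the Serre relation in disguise. Hence
     g * pbw n k j = pbw (n+1) k j - q^(2n+2k-2) pbw (n+1) k (j+1)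
                     + alpha (1 - q^-2) q^(2n+k) pbw (n+1) (k+1) j,
   so g^n expands in the monomials pbw n k j with coefficients obeying the matching
   three-term recursion in n. The a_kj(n) obey it as well: with r = n+1-k-j the four
   coefficients involved are q-power multiples of one common factor, and the recursion
   becomes the q-integer identity q^(j+k) [k+j+r] = [r] + q^(2k+j+r) [j] + q^(r+k) [k],
   a q-analogue of the trinomial Pascal rule. *)

lemma qint_0 [simp]: "qint q 0 = 0"
  by (simp add: qint_def)

lemma qfact_0 [simp]: "qfact q 0 = 1"
  by (simp add: qfact_def)

lemma qfact_Suc: "qfact q (Suc n) = qfact q n * qint q (Suc n)"
  by (simp add: qfact_def atLeastAtMostSuc_conv mult.commute)

lemma qint_add3:
  fixes q :: complex
  assumes "q \<noteq> 0"
  shows "q ^ (j + k) * qint q (k + j + r)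
           = qint q r + q ^ (2 * k + j + r) * qint q j + q ^ (r + k) * qint q k"
proof -
  have inv: "\<And>m. q ^ m * inverse q ^ m = 1"
    using assms by (simp add: power_mult_distrib[symmetric])
  have "\<And>a b c ia ib ic :: complex. a * ia = 1 \<Longrightarrow> b * ib = 1 \<Longrightarrow> c * ic = 1 \<Longrightarrow>
      b * a * (a * b * c - ia * ib * ic) = (c - ic) + a * a * b * c * (b - ib) + c * a * (a - ia)"
    by algebra
  from this[OF inv[of k] inv[of j] inv[of r]]
  have "q ^ (j + k) * (q ^ (k + j + r) - inverse q ^ (k + j + r))
      = (q ^ r - inverse q ^ r) + q ^ (2 * k + j + r) * (q ^ j - inverse q ^ j)
        + q ^ (r + k) * (q ^ k - inverse q ^ k)"
    unfolding mult_2 power_add by (simp add: mult_ac)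
  then have "q ^ (j + k) * (q ^ (k + j + r) - inverse q ^ (k + j + r)) / (q - inverse q)
      = ((q ^ r - inverse q ^ r) + q ^ (2 * k + j + r) * (q ^ j - inverse q ^ j)
        + q ^ (r + k) * (q ^ k - inverse q ^ k)) / (q - inverse q)"
    by simp
  then show ?thesis
    unfolding qint_def by (simp add: add_divide_distrib)
qed

definition acoef_exp :: "nat \<Rightarrow> nat \<Rightarrow> nat \<Rightarrow> int" where
  "acoef_exp n k j = int j * (int n - 3) + (int k * (2 * int n + 2 * int j + int k - 7)) div 2"

lemma acoef_exp_double:
  "2 * acoef_exp n k j = 2 * int j * (int n - 3) + int k * (2 * int n + 2 * int j + int k - 7)"
proof -
  have "even (int k * (2 * int n + 2 * int j + int k - 7))"
    by (cases "even k") auto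
  then show ?thesis
    unfolding acoef_exp_def by (simp add: algebra_simps)
qed

lemma acoef_exp_Suc_n: "acoef_exp (Suc n) k j = acoef_exp n k j + int j + int k"
  using acoef_exp_double[of "Suc n" k j] acoef_exp_double[of n k j] by (simp add: algebra_simps)

lemma acoef_exp_Suc_j: "acoef_exp n k (Suc j) = acoef_exp n k j + int n + int k - 3"
  using acoef_exp_double[of n k "Suc j"] acoef_exp_double[of n k j] by (simp add: algebra_simps)

lemma acoef_exp_Suc_k: "acoef_exp n (Suc k) j = acoef_exp n k j + int n + int j + int k - 3"
  using acoef_exp_double[of n "Suc k" j] acoef_exp_double[of n k j] by (simp add: algebra_simps)

lemma acoef_eq_0: "n < k + j \<Longrightarrow> acoef q \<alpha> n k j = 0"
  by (auto simp: acoef_def qbinom_def)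

locale generic_q =
  fixes q :: complex
  assumes q_nonzero: "q \<noteq> 0"
    and q_not_root_of_unity: "\<forall>m::nat. m > 0 \<longrightarrow> q ^ m \<noteq> 1"
begin

lemma qint_nonzero:
  assumes "i > 0"
  shows "qint q i \<noteq> 0"
proof
  assume "qint q i = 0"
  have "q - inverse q \<noteq> 0"
  proof
    assume "q - inverse q = 0"
    then have "q * q = q * inverse q"
      by simp
    then have "q ^ 2 = 1"
      using q_nonzero by (simp add: power2_eq_square)
    with q_not_root_of_unity show False
      by auto
  qed
  with \<open>qint q i = 0\<close> have "q ^ i = inverse q ^ i"
    unfolding qint_def by simp
  then have "q ^ i * q ^ i = 1"
    using q_nonzero by (simp add: power_inverse[symmetric] field_simps)
  then have "q ^ (2 * i) = 1"
    by (metis mult_2 power_add)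
  with q_not_root_of_unity assms show False
    by auto
qed

lemma qfact_nonzero: "qfact q n \<noteq> 0"
  by (induction n) (auto simp: qfact_Suc qint_nonzero)

(* For k + j + r = n this is a_kj(n) with its two q-binomials merged into a q-trinomial
   coefficient; for k + j + r = n + 1 it is the common factor of the four coefficients
   related by acoef_Suc. *)
definition acoef_closed :: "complex \<Rightarrow> nat \<Rightarrow> nat \<Rightarrow> nat \<Rightarrow> nat \<Rightarrow> complex" where
  "acoef_closed \<alpha> n k j r = (-1) ^ j * (\<alpha> * (q\<^sup>2 - 1)) ^ k * q powi acoef_exp n k j
     * (qfact q n / (qfact q k * qfact q j * qfact q r))"

lemma acoef_eq_closed:
  assumes "k + j + r = n"
  shows "acoef q \<alpha> n k j = acoef_closed \<alpha> n k j r"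
proof -
  have binom: "qbinom q n k * qbinom q (n - k) j = qfact q n / (qfact q k * qfact q j * qfact q r)"
    using qfact_nonzero[of "j + r"] by (simp add: assms[symmetric] qbinom_def)
  have exp: "q powi (int j * (int n - 3)) * q powi ((int k * (2 * int n + 2 * int j + int k - 7)) div 2)
      = q powi acoef_exp n k j"
    unfolding acoef_exp_def using q_nonzero by (simp add: power_int_add)
  have "acoef q \<alpha> n k j = (-1) ^ j * (\<alpha> * (q\<^sup>2 - 1)) ^ k
      * (q powi (int j * (int n - 3)) * q powi ((int k * (2 * int n + 2 * int j + int k - 7)) div 2))
      * (qbinom q n k * qbinom q (n - k) j)"
    unfolding acoef_def by (simp add: power_mult_distrib mult_ac)
  then show ?thesis
    unfolding binom exp acoef_closed_def .
qed

lemma acoef_Suc_eq_closed: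
  assumes "k + j + r = Suc n"
  shows "acoef q \<alpha> (Suc n) k j = q ^ (j + k) * qint q (Suc n) * acoef_closed \<alpha> n k j r"
proof -
  have "q powi acoef_exp (Suc n) k j = q powi acoef_exp n k j * q ^ j * q ^ k"
    using q_nonzero by (simp add: acoef_exp_Suc_n power_int_add)
  with assms show ?thesis
    by (simp add: acoef_eq_closed acoef_closed_def qfact_Suc power_add mult_ac)
qed

lemma acoef_eq_qint_closed:
  assumes "k + j + r = Suc n"
  shows "acoef q \<alpha> n k j = qint q r * acoef_closed \<alpha> n k j r"
proof (cases r)
  case 0
  with assms show ?thesis by (simp add: acoef_eq_0)
next
  case (Suc r')
  with assms qint_nonzero[of r] show ?thesis
    by (simp add: acoef_eq_closed[of k j r'] acoef_closed_def qfact_Suc field_simps)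
qed

lemma acoef_pred_j_eq_closed:
  assumes "k + Suc i + r = Suc n"
  shows "inverse q ^ 2 * q ^ (2 * n + 2 * k) * acoef q \<alpha> n k i
    = - (q ^ (2 * k + Suc i + r) * qint q (Suc i) * acoef_closed \<alpha> n k (Suc i) r)"
proof -
  have n: "n = k + i + r"
    using assms by simp
  have exp: "q powi acoef_exp n k (Suc i) = q powi acoef_exp n k i * q ^ n * q ^ k / q ^ 3"
    using q_nonzero by (simp add: acoef_exp_Suc_j power_int_add power_int_diff)
  show ?thesis
    unfolding acoef_eq_closed[of k i r n, OF n[symmetric]] acoef_closed_def exp
    using q_nonzero qint_nonzero[of "Suc i"] qfact_nonzero
    by (simp add: n qfact_Suc field_simps power_add eval_nat_numeral)
qed

lemma acoef_pred_k_eq_closed: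
  assumes "Suc i + j + r = Suc n"
  shows "\<alpha> * (1 - inverse q ^ 2) * q ^ (2 * n + i) * acoef q \<alpha> n i j
    = q ^ (r + Suc i) * qint q (Suc i) * acoef_closed \<alpha> n (Suc i) j r"
proof -
  have n: "n = i + j + r"
    using assms by simp
  have exp: "q powi acoef_exp n (Suc i) j = q powi acoef_exp n i j * q ^ n * q ^ j * q ^ i / q ^ 3"
    using q_nonzero by (simp add: acoef_exp_Suc_k power_int_add power_int_diff)
  show ?thesis
    unfolding acoef_eq_closed[of i j r n, OF n[symmetric]] acoef_closed_def exp
    using q_nonzero qint_nonzero[of "Suc i"] qfact_nonzero
    by (simp add: n qfact_Suc field_simps power_add eval_nat_numeral)
qed

end

definition g_mult_coeffs ::
    "complex \<Rightarrow> complex \<Rightarrow> nat \<Rightarrow> (nat \<Rightarrow> nat \<Rightarrow> complex) \<Rightarrow> nat \<Rightarrow> nat \<Rightarrow> complex" where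
  "g_mult_coeffs q \<alpha> n c k j = c k j
     - (case j of 0 \<Rightarrow> 0 | Suc i \<Rightarrow> inverse q ^ 2 * q ^ (2 * n + 2 * k) * c k i)
     + (case k of 0 \<Rightarrow> 0 | Suc i \<Rightarrow> \<alpha> * (1 - inverse q ^ 2) * q ^ (2 * n + i) * c i j)"

lemma (in generic_q) acoef_Suc: "acoef q \<alpha> (Suc n) k j = g_mult_coeffs q \<alpha> n (acoef q \<alpha> n) k j"
proof (cases "Suc n < k + j")
  case True
  then show ?thesis
    by (simp add: g_mult_coeffs_def acoef_eq_0 split: nat.split)
next
  case False
  then obtain r where r: "k + j + r = Suc n"
    by (metis add.commute le_iff_add not_less)
  let ?b = "acoef_closed \<alpha> n k j r"
  have j_term: "(case j of 0 \<Rightarrow> 0 | Suc i \<Rightarrow> inverse q ^ 2 * q ^ (2 * n + 2 * k) * acoef q \<alpha> n k i)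
      = - (q ^ (2 * k + j + r) * qint q j * ?b)"
    using r by (cases j) (simp_all add: acoef_pred_j_eq_closed)
  have k_term: "(case k of 0 \<Rightarrow> 0 | Suc i \<Rightarrow> \<alpha> * (1 - inverse q ^ 2) * q ^ (2 * n + i) * acoef q \<alpha> n i j)
      = q ^ (r + k) * qint q k * ?b"
    using r by (cases k) (simp_all add: acoef_pred_k_eq_closed)
  have "acoef q \<alpha> (Suc n) k j = q ^ (j + k) * qint q (k + j + r) * ?b"
    using r by (simp add: acoef_Suc_eq_closed)
  also have "\<dots> = (qint q r + q ^ (2 * k + j + r) * qint q j + q ^ (r + k) * qint q k) * ?b"
    using qint_add3[OF q_nonzero] by simp
  also have "\<dots> = g_mult_coeffs q \<alpha> n (acoef q \<alpha> n) k j"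
    unfolding g_mult_coeffs_def j_term k_term acoef_eq_qint_closed[OF r] by (simp add: algebra_simps)
  finally show ?thesis .
qed

locale scalar_algebra =
  fixes \<iota> :: "complex \<Rightarrow> 'a::ring_1"
  assumes scalar_embedding: "scalar_embedding \<iota>"
begin

lemma scalar_add: "\<iota> (a + b) = \<iota> a + \<iota> b"
  and scalar_mult: "\<iota> (a * b) = \<iota> a * \<iota> b"
  and scalar_one [simp]: "\<iota> 1 = 1"
  and scalar_commute: "\<iota> c * x = x * \<iota> c"
  using scalar_embedding unfolding scalar_embedding_def by blast+

lemma scalar_zero [simp]: "\<iota> 0 = 0"
  using scalar_add[of 0 0] by simp

lemma scalar_diff: "\<iota> (a - b) = \<iota> a - \<iota> b"
  using scalar_add[of "a - b" b] by (simp add: algebra_simps)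

(* Loops in the simplifier when x is itself a scalar, so it is only used instantiated. *)
lemma mult_scalar_left_commute: "x * (\<iota> c * y) = \<iota> c * (x * y)"
  by (metis scalar_commute mult.assoc)

lemma scalar_mult_scalar: "\<iota> a * (\<iota> b * y) = \<iota> (a * b) * y"
  by (simp add: scalar_mult mult.assoc)

definition qcommute :: "'a \<Rightarrow> 'a \<Rightarrow> complex \<Rightarrow> bool" where
  "qcommute x y c \<longleftrightarrow> x * y = \<iota> c * (y * x)"

lemma qcommute_mult_assoc: "qcommute x y c \<Longrightarrow> x * (y * z) = \<iota> c * (y * (x * z))"
  unfolding qcommute_def by (metis mult.assoc)

lemma qcommute_mult_right:
  assumes "qcommute x y c" "qcommute x z d"
  shows "qcommute x (y * z) (c * d)"
proof -
  have "x * (y * z) = \<iota> c * (y * (\<iota> d * (z * x)))"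
    using qcommute_mult_assoc[OF assms(1)] assms(2) unfolding qcommute_def by simp
  also have "\<dots> = \<iota> (c * d) * (y * z * x)"
    by (simp only: mult_scalar_left_commute[of y] scalar_mult_scalar mult.assoc)
  finally show ?thesis
    unfolding qcommute_def .
qed

lemma qcommute_mult_left:
  assumes "qcommute x z c" "qcommute y z d"
  shows "qcommute (x * y) z (c * d)"
proof -
  have "x * y * z = x * (\<iota> d * (z * y))"
    using assms(2) unfolding qcommute_def by (simp only: mult.assoc)
  also have "\<dots> = \<iota> d * ((x * z) * y)"
    by (simp only: mult_scalar_left_commute[of x] mult.assoc)
  also have "\<dots> = \<iota> d * (\<iota> c * (z * x) * y)"
    using assms(1) unfolding qcommute_def by simp
  also have "\<dots> = \<iota> (c * d) * (z * (x * y))"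
    by (simp only: scalar_mult_scalar mult.assoc mult.commute[of d c])
  finally show ?thesis
    unfolding qcommute_def .
qed

lemma qcommute_1_iff: "qcommute x y 1 \<longleftrightarrow> x * y = y * x"
  by (simp add: qcommute_def)

lemma qcommute_power_right: "qcommute x y c \<Longrightarrow> qcommute x (y ^ n) (c ^ n)"
  by (induction n) (simp_all add: qcommute_1_iff qcommute_mult_right)

lemma qcommute_power_left: "qcommute x y c \<Longrightarrow> qcommute (x ^ n) y (c ^ n)"
  by (induction n) (simp_all add: qcommute_1_iff qcommute_mult_left)

lemma qcommute_diff_scalar_right:
  assumes "qcommute x y c" "qcommute x z c"
  shows "qcommute x (y - \<iota> d * z) c"
proof -
  have "x * (y - \<iota> d * z) = x * y - \<iota> d * (x * z)"
    by (simp only: right_diff_distrib mult_scalar_left_commute[of x])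
  also have "\<dots> = \<iota> c * (y * x) - \<iota> d * (\<iota> c * (z * x))"
    using assms unfolding qcommute_def by simp
  also have "\<dots> = \<iota> c * (y * x) - \<iota> c * (\<iota> d * (z * x))"
    by (simp only: scalar_mult_scalar mult.commute[of d c])
  also have "\<dots> = \<iota> c * ((y - \<iota> d * z) * x)"
    by (simp only: left_diff_distrib right_diff_distrib mult.assoc)
  finally show ?thesis
    unfolding qcommute_def .
qed

lemma qcommute_conjugation:
  assumes "x * x' = 1" "x' * x = 1" "x * y * x' = \<iota> d * y" "d \<noteq> 0"
  shows "qcommute x y d" "qcommute x' y (inverse d)"
proof -
  have "x * y = (x * y * x') * x"
    using assms(2) by (simp add: mult.assoc)
  then show "qcommute x y d"
    unfolding qcommute_def assms(3) by (simp add: mult.assoc)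
  have "y = (x' * x) * y * (x' * x)"
    using assms(2) by simp
  also have "\<dots> = x' * (x * y * x') * x"
    by (simp only: mult.assoc)
  also have "\<dots> = \<iota> d * (x' * y * x)"
    unfolding assms(3) by (simp only: mult_scalar_left_commute[of x'] mult.assoc)
  finally have "\<iota> (inverse d) * y = \<iota> (inverse d) * (\<iota> d * (x' * y * x))"
    by (rule arg_cong)
  also have "\<dots> = x' * y * x"
    using assms(4) by (simp add: scalar_mult_scalar)
  finally have "\<iota> (inverse d) * y * x' = x' * y"
    using assms(1) by (simp add: mult.assoc)
  then show "qcommute x' y (inverse d)"
    by (simp add: qcommute_def mult.assoc)
qed

end

lemma sum_atMost_shift_Suc:
  fixes G :: "nat \<Rightarrow> nat \<Rightarrow> 'b::comm_monoid_add"
  assumes "G N (Suc N) = 0"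
  shows "(\<Sum>j\<le>N. G j (Suc j)) = (\<Sum>j\<le>N. case j of 0 \<Rightarrow> 0 | Suc i \<Rightarrow> G i j)"
proof (cases N)
  case 0
  with assms show ?thesis
    by simp
next
  case (Suc m)
  have "(\<Sum>j\<le>N. case j of 0 \<Rightarrow> 0 | Suc i \<Rightarrow> G i j) = (\<Sum>i\<le>m. G i (Suc i))"
    unfolding Suc sum.atMost_Suc_shift by simp
  with Suc assms show ?thesis
    by simp
qed

locale uq_sl3 = generic_q q + scalar_algebra \<iota>
  for q :: complex and \<iota> :: "complex \<Rightarrow> 'a::ring_1" +
  fixes \<alpha> :: complex and E1 E2 F1 F2 K1 K1i K2 K2i :: 'a
  assumes jimbo: "jimbo_sl3 q \<iota> E1 E2 F1 F2 K1 K1i K2 K2i"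
begin

definition F3 :: 'a where
  "F3 = F1 * F2 - \<iota> q * F2 * F1"

definition Kinv :: 'a where
  "Kinv = K1i * K2i ^ 2"

definition g :: 'a where
  "g = F2 * (1 - \<iota> (inverse q ^ 2) * K2 ^ 2 * Kinv ^ 2) + \<iota> (\<alpha> * (1 - inverse q ^ 2)) * F3 * Kinv"

lemma K_inverse: "K1 * K1i = 1" "K1i * K1 = 1" "K2 * K2i = 1" "K2i * K2 = 1"
  and K1_K2_commute: "K1 * K2 = K2 * K1"
  and K_conj_F: "K1 * F1 * K1i = \<iota> (inverse q ^ 2) * F1" "K1 * F2 * K1i = \<iota> q * F2"
    "K2 * F1 * K2i = \<iota> q * F1" "K2 * F2 * K2i = \<iota> (inverse q ^ 2) * F2"
  and serre_F: "F2 ^ 2 * F1 - \<iota> (q + inverse q) * F2 * F1 * F2 + F1 * F2 ^ 2 = 0"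
  using jimbo unfolding jimbo_sl3_def by auto

lemma qcommute_K2_F1: "qcommute K2 F1 q"
  and qcommute_K2_F2: "qcommute K2 F2 (inverse q ^ 2)"
  and qcommute_K1i_F1: "qcommute K1i F1 (q ^ 2)"
  and qcommute_K1i_F2: "qcommute K1i F2 (inverse q)"
  and qcommute_K2i_F1: "qcommute K2i F1 (inverse q)"
  and qcommute_K2i_F2: "qcommute K2i F2 (q ^ 2)"
  using qcommute_conjugation[OF K_inverse(3,4) K_conj_F(3)]
    qcommute_conjugation[OF K_inverse(3,4) K_conj_F(4)]
    qcommute_conjugation(2)[OF K_inverse(1,2) K_conj_F(1)]
    qcommute_conjugation(2)[OF K_inverse(1,2) K_conj_F(2)]
    q_nonzero
  by (simp_all add: power_inverse)

lemma qcommute_F3: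
  assumes "qcommute x F1 a" "qcommute x F2 b"
  shows "qcommute x F3 (a * b)"
proof -
  have "qcommute x (F1 * F2) (a * b)" "qcommute x (F2 * F1) (a * b)"
    using qcommute_mult_right[OF assms] qcommute_mult_right[OF assms(2,1)] by (simp_all add: mult.commute)
  then show ?thesis
    unfolding F3_def mult.assoc by (rule qcommute_diff_scalar_right)
qed

lemma qcommute_Kinv_F2: "qcommute Kinv F2 (q ^ 3)"
  using qcommute_mult_left[OF qcommute_K1i_F2 qcommute_power_left[OF qcommute_K2i_F2, of 2]] q_nonzero
  by (simp add: Kinv_def field_simps eval_nat_numeral)

lemma qcommute_Kinv_F3: "qcommute Kinv F3 (q ^ 3)"
proof -
  have "qcommute Kinv F1 1"
    using qcommute_mult_left[OF qcommute_K1i_F1 qcommute_power_left[OF qcommute_K2i_F1, of 2]] q_nonzero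
    by (simp add: Kinv_def field_simps)
  from qcommute_F3[OF this qcommute_Kinv_F2] show ?thesis
    by simp
qed

lemma qcommute_K2_F3: "qcommute K2 F3 (inverse q)"
  using qcommute_F3[OF qcommute_K2_F1 qcommute_K2_F2] q_nonzero by (simp add: field_simps power2_eq_square)

lemma qcommute_F3_F2: "qcommute F3 F2 (inverse q)"
proof -
  have "F3 * F2 = F1 * F2 ^ 2 - \<iota> q * (F2 * F1 * F2)"
    unfolding F3_def by (simp add: left_diff_distrib power2_eq_square mult.assoc)
  also have "\<dots> = \<iota> (inverse q) * (F2 * F1 * F2) - F2 ^ 2 * F1"
    using serre_F by (simp add: scalar_add algebra_simps eq_neg_iff_add_eq_0)
  also have "\<dots> = \<iota> (inverse q) * (F2 * F3)"
  proof -
    have "F2 * F3 = F2 * F1 * F2 - \<iota> q * (F2 * F2 * F1)"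
      unfolding F3_def by (simp add: right_diff_distrib mult_scalar_left_commute[of F2] mult.assoc)
    then show ?thesis
      using q_nonzero by (simp add: right_diff_distrib scalar_mult_scalar power2_eq_square)
  qed
  finally show ?thesis
    unfolding qcommute_def .
qed

lemma K2_Kinv_power_commute: "K2 ^ a * Kinv ^ b = Kinv ^ b * K2 ^ a"
proof -
  have "K2 * K1i = K1i * K2"
    by (metis K_inverse(1,2) K1_K2_commute mult.assoc mult_1_left mult_1_right)
  moreover have "K2 * K2i = K2i * K2"
    using K_inverse(3,4) by simp
  ultimately have "qcommute K2 Kinv 1"
    using qcommute_mult_right[of K2 K1i 1 "K2i ^ 2" 1] qcommute_power_right[of K2 K2i 1 2]
    by (simp add: Kinv_def qcommute_1_iff)
  from qcommute_power_right[OF qcommute_power_left[OF this]] show ?thesis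
    by (simp add: qcommute_1_iff)
qed

definition pbw :: "nat \<Rightarrow> nat \<Rightarrow> nat \<Rightarrow> 'a" where
  "pbw n k j = (F2 ^ (n - k) * F3 ^ k) * (K2 ^ (2 * j) * Kinv ^ (2 * j + k))"

lemma F2_mult_pbw: "k \<le> n \<Longrightarrow> F2 * pbw n k j = pbw (Suc n) k j"
  unfolding pbw_def by (simp add: Suc_diff_le mult.assoc)

lemma K_mult_pbw:
  assumes "k \<le> n"
  shows "K2 ^ 2 * Kinv ^ 2 * pbw n k j = \<iota> (q ^ (2 * n + 2 * k)) * pbw n k (Suc j)"
proof -
  let ?T = "K2 ^ 2 * Kinv ^ 2" and ?P = "F2 ^ (n - k) * F3 ^ k"
    and ?R = "K2 ^ (2 * j) * Kinv ^ (2 * j + k)"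
  have "qcommute ?T F2 (q ^ 2)" "qcommute ?T F3 (q ^ 4)"
    using qcommute_mult_left[OF qcommute_power_left[OF qcommute_K2_F2, of 2]
        qcommute_power_left[OF qcommute_Kinv_F2, of 2]]
      qcommute_mult_left[OF qcommute_power_left[OF qcommute_K2_F3, of 2]
        qcommute_power_left[OF qcommute_Kinv_F3, of 2]]
      q_nonzero
    by (simp_all add: field_simps eval_nat_numeral)
  from qcommute_mult_right[OF qcommute_power_right[OF this(1), of "n - k"]
      qcommute_power_right[OF this(2), of k]]
  have "qcommute ?T ?P (q ^ (2 * (n - k) + 4 * k))"
    by (simp flip: power_mult power_add)
  moreover have "2 * (n - k) + 4 * k = 2 * n + 2 * k"
    using assms by simp
  ultimately have T_P: "qcommute ?T ?P (q ^ (2 * n + 2 * k))"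
    by simp
  have "?T * ?R = K2 ^ 2 * (Kinv ^ 2 * K2 ^ (2 * j)) * Kinv ^ (2 * j + k)"
    by (simp only: mult.assoc)
  also have "\<dots> = (K2 ^ 2 * K2 ^ (2 * j)) * (Kinv ^ 2 * Kinv ^ (2 * j + k))"
    by (simp only: K2_Kinv_power_commute[of "2 * j" 2, symmetric] mult.assoc)
  also have "\<dots> = K2 ^ (2 * Suc j) * Kinv ^ (2 * Suc j + k)"
    by (simp flip: power_add)
  finally have T_R: "?T * ?R = K2 ^ (2 * Suc j) * Kinv ^ (2 * Suc j + k)" .
  show ?thesis
    unfolding pbw_def qcommute_mult_assoc[OF T_P] T_R ..
qed

lemma F3_Kinv_mult_pbw:
  assumes "k \<le> n"
  shows "F3 * Kinv * pbw n k j = \<iota> (q ^ (2 * n + k)) * pbw (Suc n) (Suc k) j"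
proof -
  let ?P = "F2 ^ (n - k) * F3 ^ k" and ?R = "K2 ^ (2 * j) * Kinv ^ (2 * j + k)"
  have "qcommute Kinv ?P (q ^ (3 * (n - k) + 3 * k))"
    using qcommute_mult_right[OF qcommute_power_right[OF qcommute_Kinv_F2, of "n - k"]
        qcommute_power_right[OF qcommute_Kinv_F3, of k]]
    by (simp flip: power_mult power_add)
  moreover have "3 * (n - k) + 3 * k = 3 * n"
    using assms by simp
  ultimately have Kinv_P: "qcommute Kinv ?P (q ^ (3 * n))"
    by simp
  have F3_P: "F3 * ?P = \<iota> (inverse q ^ (n - k)) * (F2 ^ (n - k) * F3 ^ Suc k)"
    using qcommute_mult_assoc[OF qcommute_power_right[OF qcommute_F3_F2, of "n - k"]] by simp
  have Kinv_R: "Kinv * ?R = K2 ^ (2 * j) * Kinv ^ (2 * j + Suc k)"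
    using K2_Kinv_power_commute[of "2 * j" 1] by (simp flip: mult.assoc)
  have "F3 * Kinv * pbw n k j = F3 * (\<iota> (q ^ (3 * n)) * (?P * (Kinv * ?R)))"
    unfolding pbw_def mult.assoc[of F3] qcommute_mult_assoc[OF Kinv_P] ..
  also have "\<dots> = \<iota> (q ^ (3 * n)) * ((F3 * ?P) * (Kinv * ?R))"
    by (simp only: mult_scalar_left_commute[of F3] mult.assoc)
  also have "\<dots> = \<iota> (q ^ (3 * n) * inverse q ^ (n - k)) * pbw (Suc n) (Suc k) j"
    unfolding F3_P Kinv_R pbw_def by (simp add: scalar_mult_scalar mult.assoc)
  also have "q ^ (3 * n) * inverse q ^ (n - k) = q ^ (2 * n + k)"
    using assms q_nonzero by (simp add: field_simps flip: power_add)
  finally show ?thesis .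
qed

lemma g_mult_pbw:
  assumes "k \<le> n"
  shows "g * pbw n k j = pbw (Suc n) k j
    - \<iota> (inverse q ^ 2 * q ^ (2 * n + 2 * k)) * pbw (Suc n) k (Suc j)
    + \<iota> (\<alpha> * (1 - inverse q ^ 2) * q ^ (2 * n + k)) * pbw (Suc n) (Suc k) j"
proof -
  have "g * pbw n k j = F2 * pbw n k j - \<iota> (inverse q ^ 2) * (F2 * (K2 ^ 2 * Kinv ^ 2 * pbw n k j))
      + \<iota> (\<alpha> * (1 - inverse q ^ 2)) * (F3 * Kinv * pbw n k j)"
    unfolding g_def
    by (simp add: algebra_simps mult_scalar_left_commute[of F2])
  then show ?thesis
    using assms
    by (simp add: F2_mult_pbw K_mult_pbw F3_Kinv_mult_pbw mult_scalar_left_commute[of F2]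
        scalar_mult_scalar)
qed

definition pbw_sum :: "nat \<Rightarrow> nat \<Rightarrow> (nat \<Rightarrow> nat \<Rightarrow> complex) \<Rightarrow> 'a" where
  "pbw_sum n N c = (\<Sum>k\<le>N. \<Sum>j\<le>N. \<iota> (c k j) * pbw n k j)"

lemma pbw_sum_eq_triangle:
  assumes "\<forall>k j. n < k + j \<longrightarrow> c k j = 0" "n \<le> N"
  shows "pbw_sum n N c = (\<Sum>k\<le>n. \<Sum>j\<le>n - k. \<iota> (c k j) * pbw n k j)"
proof -
  have "pbw_sum n N c = (\<Sum>k\<le>n. \<Sum>j\<le>N. \<iota> (c k j) * pbw n k j)"
    unfolding pbw_sum_def
    by (rule sum.mono_neutral_right) (use assms in \<open>auto intro!: sum.neutral\<close>)
  also have "\<dots> = (\<Sum>k\<le>n. \<Sum>j\<le>n - k. \<iota> (c k j) * pbw n k j)"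
  proof (rule sum.cong[OF refl])
    fix k
    assume "k \<in> {..n}"
    then have "c k j = 0" if "n - k < j" for j
      using assms(1) that by auto
    then show "(\<Sum>j\<le>N. \<iota> (c k j) * pbw n k j) = (\<Sum>j\<le>n - k. \<iota> (c k j) * pbw n k j)"
      by (intro sum.mono_neutral_right) (use assms(2) in auto)
  qed
  finally show ?thesis .
qed

lemma pbw_sum_shift_j:
  assumes "\<forall>k. c k N = 0"
  shows "(\<Sum>k\<le>N. \<Sum>j\<le>N. \<iota> (c k j) * pbw m k (Suc j))
    = pbw_sum m N (\<lambda>k j. case j of 0 \<Rightarrow> 0 | Suc i \<Rightarrow> c k i)"
  unfolding pbw_sum_def
proof (rule sum.cong[OF refl])
  fix k
  have "(\<Sum>j\<le>N. \<iota> (c k j) * pbw m k (Suc j))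
      = (\<Sum>j\<le>N. case j of 0 \<Rightarrow> 0 | Suc i \<Rightarrow> \<iota> (c k i) * pbw m k j)"
    by (rule sum_atMost_shift_Suc) (use assms in simp)
  also have "\<dots> = (\<Sum>j\<le>N. \<iota> (case j of 0 \<Rightarrow> 0 | Suc i \<Rightarrow> c k i) * pbw m k j)"
    by (intro sum.cong refl) (simp split: nat.split)
  finally show "(\<Sum>j\<le>N. \<iota> (c k j) * pbw m k (Suc j))
      = (\<Sum>j\<le>N. \<iota> (case j of 0 \<Rightarrow> 0 | Suc i \<Rightarrow> c k i) * pbw m k j)" .
qed

lemma pbw_sum_shift_k:
  assumes "\<forall>j. c N j = 0"
  shows "(\<Sum>k\<le>N. \<Sum>j\<le>N. \<iota> (c k j) * pbw m (Suc k) j)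
    = pbw_sum m N (\<lambda>k j. case k of 0 \<Rightarrow> 0 | Suc i \<Rightarrow> c i j)"
proof -
  have "(\<Sum>k\<le>N. \<Sum>j\<le>N. \<iota> (c k j) * pbw m (Suc k) j)
      = (\<Sum>k\<le>N. case k of 0 \<Rightarrow> 0 | Suc i \<Rightarrow> \<Sum>j\<le>N. \<iota> (c i j) * pbw m k j)"
    by (rule sum_atMost_shift_Suc) (use assms in simp)
  also have "\<dots> = pbw_sum m N (\<lambda>k j. case k of 0 \<Rightarrow> 0 | Suc i \<Rightarrow> c i j)"
    unfolding pbw_sum_def by (intro sum.cong refl) (simp split: nat.split)
  finally show ?thesis .
qed

lemma pbw_sum_diff_add:
  "pbw_sum m N a - pbw_sum m N b + pbw_sum m N c = pbw_sum m N (\<lambda>k j. a k j - b k j + c k j)"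
  unfolding pbw_sum_def
  by (simp only: scalar_add scalar_diff distrib_right left_diff_distrib sum.distrib sum_subtractf)

lemma g_mult_pbw_sum:
  assumes vanish: "\<forall>k j. n < k + j \<longrightarrow> c k j = 0" and "n < N"
  shows "g * pbw_sum n N c = pbw_sum (Suc n) N (g_mult_coeffs q \<alpha> n c)"
proof -
  define d1 where "d1 k = inverse q ^ 2 * q ^ (2 * n + 2 * k)" for k
  define d2 where "d2 k = \<alpha> * (1 - inverse q ^ 2) * q ^ (2 * n + k)" for k
  have summand: "g * (\<iota> (c k j) * pbw n k j) = \<iota> (c k j) * pbw (Suc n) k j
      - \<iota> (d1 k * c k j) * pbw (Suc n) k (Suc j) + \<iota> (d2 k * c k j) * pbw (Suc n) (Suc k) j" for k j
  proof (cases "k \<le> n")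
    case True
    then show ?thesis
      unfolding mult_scalar_left_commute[of g] g_mult_pbw[OF True] d1_def d2_def
      by (simp add: right_diff_distrib distrib_left scalar_mult_scalar mult.commute)
  next
    case False
    with vanish show ?thesis
      by simp
  qed
  have "g * pbw_sum n N c = pbw_sum (Suc n) N c
      - (\<Sum>k\<le>N. \<Sum>j\<le>N. \<iota> (d1 k * c k j) * pbw (Suc n) k (Suc j))
      + (\<Sum>k\<le>N. \<Sum>j\<le>N. \<iota> (d2 k * c k j) * pbw (Suc n) (Suc k) j)"
    unfolding pbw_sum_def sum_distrib_left summand by (simp only: sum.distrib sum_subtractf)
  also have "\<dots> = pbw_sum (Suc n) N c
      - pbw_sum (Suc n) N (\<lambda>k j. case j of 0 \<Rightarrow> 0 | Suc i \<Rightarrow> d1 k * c k i)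
      + pbw_sum (Suc n) N (\<lambda>k j. case k of 0 \<Rightarrow> 0 | Suc i \<Rightarrow> d2 i * c i j)"
    using vanish \<open>n < N\<close>
    by (simp add: pbw_sum_shift_j[of "\<lambda>k j. d1 k * c k j"] pbw_sum_shift_k[of "\<lambda>k j. d2 k * c k j"])
  also have "\<dots> = pbw_sum (Suc n) N (g_mult_coeffs q \<alpha> n c)"
    unfolding pbw_sum_diff_add g_mult_coeffs_def d1_def d2_def ..
  finally show ?thesis .
qed

theorem g_power: "g ^ n = (\<Sum>k\<le>n. \<Sum>j\<le>n - k. \<iota> (acoef q \<alpha> n k j) * pbw n k j)"
proof (induction n)
  case 0
  show ?case
    by (simp add: acoef_def qbinom_def pbw_def)
next
  case (Suc n)
  have vanish: "\<forall>k j. m < k + j \<longrightarrow> acoef q \<alpha> m k j = 0" for m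
    by (simp add: acoef_eq_0)
  have "g ^ Suc n = g * pbw_sum n (Suc n) (acoef q \<alpha> n)"
    using Suc.IH pbw_sum_eq_triangle[OF vanish, of n "Suc n"] by simp
  also have "\<dots> = pbw_sum (Suc n) (Suc n) (acoef q \<alpha> (Suc n))"
    using g_mult_pbw_sum[OF vanish] by (simp add: acoef_Suc[abs_def])
  also have "\<dots> = (\<Sum>k\<le>Suc n. \<Sum>j\<le>Suc n - k. \<iota> (acoef q \<alpha> (Suc n) k j) * pbw (Suc n) k j)"
    by (rule pbw_sum_eq_triangle[OF vanish order_refl])
  finally show ?case .
qed

end

theorem corollary5p9:
  fixes q \<alpha> :: complex
    and \<iota> :: "complex \<Rightarrow> 'a::ring_1"
    and E1 E2 F1 F2 K1 K1i K2 K2i :: 'a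
    and act :: "'a \<Rightarrow> 'v::ab_group_add \<Rightarrow> 'v"
    and v :: 'v
    and n :: nat and l :: int and Q :: 'a
  assumes q_nz: "q \<noteq> 0"
    and q_not_root: "\<forall>m::nat. m > 0 \<longrightarrow> q ^ m \<noteq> 1"
    and alpha_nz: "\<alpha> \<noteq> 0"
    and scal: "scalar_embedding \<iota>"
    and rels: "jimbo_sl3 q \<iota> E1 E2 F1 F2 K1 K1i K2 K2i"
    and modl: "left_module act"
    and whit1: "act E1 v = act (\<iota> \<alpha>) v"
    and whit2: "act E2 v = 0"
    and Q_in: "Q \<in> kc_alg \<iota> (K1 * K2 ^ 2) (K1i * K2i ^ 2)
                  (F1 * E1 + \<iota> (1 / (q - inverse q) ^ 2) * (\<iota> q * K1 + \<iota> (inverse q) * K1i))"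
  shows
    "(let F3 = F1 * F2 - \<iota> q * F2 * F1;
          Ki = K1i * K2i ^ 2;
          g = F2 * (1 - \<iota> (inverse q ^ 2) * K2 ^ 2 * Ki ^ 2)
              + \<iota> (\<alpha> * (1 - inverse q ^ 2)) * F3 * Ki
      in act (\<iota> (q powi (2 * int n * l)) * zpow K2 K2i l *
              (\<Sum>k\<in>{0..n}. \<Sum>j\<in>{0..n - k}.
                 \<iota> (acoef q \<alpha> n k j) * F2 ^ (n - k) * F3 ^ k * K2 ^ (2 * j) * Ki ^ (2 * j + k) * Q)) v
         = act (\<iota> (q powi (2 * int n * l)) * zpow K2 K2i l * g ^ n * Q) v)"
proof -
  interpret uq_sl3 q \<iota> \<alpha> E1 E2 F1 F2 K1 K1i K2 K2i
    by unfold_locales (use q_nz q_not_root scal rels in auto)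
  have "(\<Sum>k\<in>{0..n}. \<Sum>j\<in>{0..n - k}. \<iota> (acoef q \<alpha> n k j) * F2 ^ (n - k) * F3 ^ k
            * K2 ^ (2 * j) * Kinv ^ (2 * j + k) * Q) = g ^ n * Q"
    unfolding g_power pbw_def sum_distrib_right atLeast0AtMost by (simp only: mult.assoc)
  then show ?thesis
    unfolding F3_def Kinv_def g_def Let_def by (simp add: mult.assoc)
qed

end
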